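(* Let $(L,\wedge,\vee,0,1)$ be a bounded lattice and for $x,y\in L$ set $x\boxplus y:=\{z\in L\mid x\vee y=x\vee z=z\vee y\}$. Then $(L,\boxplus,0)$ is a commutative, total and reproductive mosaic, in which the inverse of each $x\in L$ is $x$ itself. Moreover, $1$ is the unique element $u\in L$ such that for all $x\in L$: $u\in x\boxplus x$ implies $x=u$.
   Context: A multioperation on a set $A$ is a function $\boxplus:A\times A\to\wp(A)$; for $x\in A$ and $Y\subseteq A$, $x\boxplus Y:=\bigcup_{y\in Y}x\boxplus y$. It is total if $x\boxplus y\ne\emptyset$ for all $x,y$; commutative if $x\boxplus y=y\boxplus x$; reproductive if $x\boxplus A=A$ for all $x\in A$. A neutral element $e$ satisfies $e\boxplus x=x\boxplus e=\{x\}$ for all $x$. For an endofunction $\rho$, $\rho$-reversibility means: $z\in x\boxplus y$ implies $x\in z\boxplus\rho(y)$ and $y\in\rho(x)\boxplus z$. A mosaic $(A,\boxplus,e)$ is a set with a multioperation with neutral element $e$ that is $\rho$-reversible for some endofunction $\rho$. An inverse of $x$ is an element $y$ with $e\in(x\boxplus y)\cap(y\boxplus x)$. *)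

theory Defs
  imports Main
begin

text \<open>Multioperations on the whole type (carrier = UNIV).\<close>

definition mo_total :: "('a \<Rightarrow> 'a \<Rightarrow> 'a set) \<Rightarrow> bool" where
  "mo_total op \<longleftrightarrow> (\<forall>x y. op x y \<noteq> {})"

definition mo_commutative :: "('a \<Rightarrow> 'a \<Rightarrow> 'a set) \<Rightarrow> bool" where
  "mo_commutative op \<longleftrightarrow> (\<forall>x y. op x y = op y x)"

definition mo_reproductive :: "('a \<Rightarrow> 'a \<Rightarrow> 'a set) \<Rightarrow> bool" where
  "mo_reproductive op \<longleftrightarrow> (\<forall>x. (\<Union>y\<in>UNIV. op x y) = UNIV)"

definition neutral :: "('a \<Rightarrow> 'a \<Rightarrow> 'a set) \<Rightarrow> 'a \<Rightarrow> bool" where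
  "neutral op e \<longleftrightarrow> (\<forall>x. op e x = {x} \<and> op x e = {x})"

definition rho_reversible :: "('a \<Rightarrow> 'a \<Rightarrow> 'a set) \<Rightarrow> ('a \<Rightarrow> 'a) \<Rightarrow> bool" where
  "rho_reversible op \<rho> \<longleftrightarrow>
     (\<forall>x y z. z \<in> op x y \<longrightarrow> x \<in> op z (\<rho> y) \<and> y \<in> op (\<rho> x) z)"

definition mosaic :: "('a \<Rightarrow> 'a \<Rightarrow> 'a set) \<Rightarrow> 'a \<Rightarrow> bool" where
  "mosaic op e \<longleftrightarrow> neutral op e \<and> (\<exists>\<rho>. rho_reversible op \<rho>)"

definition is_inverse :: "('a \<Rightarrow> 'a \<Rightarrow> 'a set) \<Rightarrow> 'a \<Rightarrow> 'a \<Rightarrow> 'a \<Rightarrow> bool" where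
  "is_inverse op e x y \<longleftrightarrow> e \<in> op x y \<inter> op y x"

definition lat_plus :: "'a::bounded_lattice \<Rightarrow> 'a \<Rightarrow> 'a set" where
  "lat_plus x y = {z. sup x y = sup x z \<and> sup x z = sup z y}"

end

theory Submission
  imports Defs
begin

text \<open>Membership \<open>z \<in> x \<boxplus> y\<close> only asks that \<open>x \<squnion> z\<close> and \<open>z \<squnion> y\<close> both equal \<open>x \<squnion> y\<close>.
  This condition is symmetric under swapping \<open>x\<close> and \<open>y\<close>, and under exchanging \<open>z\<close> with
  either of them, which gives commutativity and \<open>id\<close>-reversibility; \<open>x \<squnion> y\<close> witnesses
  totality, \<open>z \<in> x \<boxplus> (x \<squnion> z)\<close> gives reproductivity, and \<open>u \<in> x \<boxplus> x\<close> just means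
  \<open>u \<le> x\<close>, so the elements with the last property are the maximal ones.\<close>

lemma lat_plus_iff:
  "z \<in> lat_plus x y \<longleftrightarrow> sup x z = sup x y \<and> sup z y = sup x y"
  unfolding lat_plus_def by auto

lemma lat_plus_commute: "lat_plus x y = lat_plus y x"
  unfolding set_eq_iff lat_plus_iff by (auto simp: sup_commute)

lemma neutral_lat_plus_bot: "neutral lat_plus bot"
  unfolding neutral_def set_eq_iff lat_plus_iff by auto

lemma rho_reversible_lat_plus_id: "rho_reversible lat_plus id"
  unfolding rho_reversible_def lat_plus_iff by (auto simp: sup_commute)

lemma mosaic_lat_plus: "mosaic lat_plus bot"
  unfolding mosaic_def using neutral_lat_plus_bot rho_reversible_lat_plus_id by blast

lemma sup_in_lat_plus: "sup x y \<in> lat_plus x y"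
  unfolding lat_plus_iff by (simp add: sup_assoc sup_left_commute sup_commute)

lemma in_lat_plus_sup: "z \<in> lat_plus x (sup x z)"
  unfolding lat_plus_iff by (simp add: sup_assoc sup_left_commute sup_commute)

lemma mo_total_lat_plus: "mo_total lat_plus"
  unfolding mo_total_def using sup_in_lat_plus by blast

lemma mo_reproductive_lat_plus: "mo_reproductive lat_plus"
  unfolding mo_reproductive_def using in_lat_plus_sup by blast

lemma bot_in_lat_plus_iff: "bot \<in> lat_plus x y \<longleftrightarrow> y = x"
  unfolding lat_plus_iff by (auto simp: sup_commute)

lemma is_inverse_lat_plus_bot_iff: "is_inverse lat_plus bot x y \<longleftrightarrow> y = x"
  unfolding is_inverse_def using bot_in_lat_plus_iff by blast

lemma in_lat_plus_self_iff: "u \<in> lat_plus x x \<longleftrightarrow> u \<le> x"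
  unfolding lat_plus_iff by (auto simp: sup_commute le_iff_sup)

lemma below_only_self_iff_top:
  fixes u :: "'a::bounded_lattice"
  shows "(\<forall>x. u \<le> x \<longrightarrow> x = u) \<longleftrightarrow> u = top"
  by (metis top_greatest top_unique)

theorem mainTheorem4:
  shows "mosaic (lat_plus :: 'a::bounded_lattice \<Rightarrow> 'a \<Rightarrow> 'a set) bot
    \<and> mo_commutative (lat_plus :: 'a \<Rightarrow> 'a \<Rightarrow> 'a set)
    \<and> mo_total (lat_plus :: 'a \<Rightarrow> 'a \<Rightarrow> 'a set)
    \<and> mo_reproductive (lat_plus :: 'a \<Rightarrow> 'a \<Rightarrow> 'a set)
    \<and> (\<forall>x::'a. \<forall>y. is_inverse lat_plus bot x y \<longleftrightarrow> y = x)
    \<and> (\<forall>u::'a. (\<forall>x. u \<in> lat_plus x x \<longrightarrow> x = u) \<longleftrightarrow> u = top)"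
  unfolding mo_commutative_def is_inverse_lat_plus_bot_iff in_lat_plus_self_iff
    below_only_self_iff_top
  using mosaic_lat_plus lat_plus_commute mo_total_lat_plus mo_reproductive_lat_plus
  by blast

end
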